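(* Let $G=(V,E)$ be a finite connected block graph with at least two vertices that has no false twins (no pair of distinct vertices $u,v$ with $N(u)=N(v)$), and suppose $G$ is isomorphic neither to the path $P_2$ on two vertices nor to the path $P_4$ on four vertices. Then $\gamma^{OLD}(G)\leq |V(G)|-1$.
   Context: A block graph is a graph in which every maximal 2-connected subgraph (block) is a clique. For a vertex $u$, $N(u)$ denotes its open neighborhood. A set $C\subseteq V(G)$ is an open locating-dominating code (OLD-code) if $N(u)\cap C\neq\emptyset$ for every vertex $u$ and $N(u)\cap C\neq N(v)\cap C$ for all distinct vertices $u,v$. A graph admits an OLD-code iff it has no isolated vertices and no false twins. $\gamma^{OLD}(G)$ is the minimum cardinality of an OLD-code of $G$. *)

theory Defs
  imports Main
begin

definition simple_graph :: "'a set \<Rightarrow> ('a \<Rightarrow> 'a \<Rightarrow> bool) \<Rightarrow> bool" where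
  "simple_graph V E \<longleftrightarrow> finite V \<and> (\<forall>u v. E u v \<longrightarrow> u \<in> V \<and> v \<in> V)
     \<and> (\<forall>u v. E u v \<longrightarrow> E v u) \<and> (\<forall>u. \<not> E u u)"

definition nbhd :: "'a set \<Rightarrow> ('a \<Rightarrow> 'a \<Rightarrow> bool) \<Rightarrow> 'a \<Rightarrow> 'a set" where
  "nbhd V E u = {v \<in> V. E u v}"

text \<open>The induced subgraph on S is connected (vacuously true for S empty).\<close>
definition connected_on :: "('a \<Rightarrow> 'a \<Rightarrow> bool) \<Rightarrow> 'a set \<Rightarrow> bool" where
  "connected_on E S \<longleftrightarrow>
     (\<forall>x\<in>S. \<forall>y\<in>S. (\<lambda>a b. a \<in> S \<and> b \<in> S \<and> E a b)\<^sup>*\<^sup>* x y)"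

definition connected_graph :: "'a set \<Rightarrow> ('a \<Rightarrow> 'a \<Rightarrow> bool) \<Rightarrow> bool" where
  "connected_graph V E \<longleftrightarrow> V \<noteq> {} \<and> connected_on E V"

definition nonsep_on :: "'a set \<Rightarrow> ('a \<Rightarrow> 'a \<Rightarrow> bool) \<Rightarrow> 'a set \<Rightarrow> bool" where
  "nonsep_on V E B \<longleftrightarrow> B \<noteq> {} \<and> B \<subseteq> V \<and> connected_on E B
     \<and> (\<forall>v\<in>B. connected_on E (B - {v}))"

text \<open>Blocks: maximal connected subgraphs without a cut vertex
  (maximal 2-connected subgraphs, or bridges / isolated vertices).\<close>
definition is_block :: "'a set \<Rightarrow> ('a \<Rightarrow> 'a \<Rightarrow> bool) \<Rightarrow> 'a set \<Rightarrow> bool" where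
  "is_block V E B \<longleftrightarrow> nonsep_on V E B \<and> (\<forall>B'. nonsep_on V E B' \<and> B \<subseteq> B' \<longrightarrow> B' = B)"

definition is_clique :: "('a \<Rightarrow> 'a \<Rightarrow> bool) \<Rightarrow> 'a set \<Rightarrow> bool" where
  "is_clique E B \<longleftrightarrow> (\<forall>u\<in>B. \<forall>v\<in>B. u \<noteq> v \<longrightarrow> E u v)"

definition block_graph :: "'a set \<Rightarrow> ('a \<Rightarrow> 'a \<Rightarrow> bool) \<Rightarrow> bool" where
  "block_graph V E \<longleftrightarrow> (\<forall>B. is_block V E B \<longrightarrow> is_clique E B)"

definition no_false_twins :: "'a set \<Rightarrow> ('a \<Rightarrow> 'a \<Rightarrow> bool) \<Rightarrow> bool" where
  "no_false_twins V E \<longleftrightarrow> (\<forall>u\<in>V. \<forall>v\<in>V. u \<noteq> v \<longrightarrow> nbhd V E u \<noteq> nbhd V E v)"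

definition iso_path :: "'a set \<Rightarrow> ('a \<Rightarrow> 'a \<Rightarrow> bool) \<Rightarrow> nat \<Rightarrow> bool" where
  "iso_path V E n \<longleftrightarrow> (\<exists>f. bij_betw f V {0..<n} \<and>
     (\<forall>u\<in>V. \<forall>v\<in>V. E u v \<longleftrightarrow> (f u + 1 = f v \<or> f v + 1 = f u)))"

definition is_OLD_code :: "'a set \<Rightarrow> ('a \<Rightarrow> 'a \<Rightarrow> bool) \<Rightarrow> 'a set \<Rightarrow> bool" where
  "is_OLD_code V E C \<longleftrightarrow> C \<subseteq> V
     \<and> (\<forall>u\<in>V. nbhd V E u \<inter> C \<noteq> {})
     \<and> (\<forall>u\<in>V. \<forall>v\<in>V. u \<noteq> v \<longrightarrow> nbhd V E u \<inter> C \<noteq> nbhd V E v \<inter> C)"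

definition gamma_OLD :: "'a set \<Rightarrow> ('a \<Rightarrow> 'a \<Rightarrow> bool) \<Rightarrow> nat" where
  "gamma_OLD V E = Min {card C | C. is_OLD_code V E C}"

end

theory Submission
  imports Defs
begin

(* It suffices to find a vertex v such that V - {v} is an OLD-code.  Without false twins,
   V - {v} fails to be one only if v is the sole neighbour of some vertex, or if
   N(u) = N(w) + {v} for some u, w.  In a block graph two non-adjacent vertices have at most
   one common neighbour (two would give a chordless 4-cycle, which is 2-connected and hence
   inside a block that is not a clique), so in the second case w is a leaf.  So if no single
   deletion works there is a leaf a.  The failure of deleting a makes its neighbour b a leaf
   (G = P2) or gives N(b) = {a, x} with another leaf w hanging at x; the failure of deleting
   w then forces N(x) = {w, b}, and G = P4. *)

lemma in_nbhd_iff: "simple_graph V E \<Longrightarrow> b \<in> nbhd V E a \<longleftrightarrow> E a b"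
  by (auto simp: simple_graph_def nbhd_def)

lemma connected_on_singleton: "connected_on E {a}"
  by (simp add: connected_on_def)

lemma connected_on_insert:
  assumes sym: "\<And>a b. E a b \<Longrightarrow> E b a"
    and conn: "connected_on E S" and "y \<in> S" "E x y"
  shows "connected_on E (insert x S)"
proof -
  let ?R = "\<lambda>a b. a \<in> insert x S \<and> b \<in> insert x S \<and> E a b"
  have in_S: "?R\<^sup>*\<^sup>* a b" if "a \<in> S" "b \<in> S" for a b
  proof -
    have "(\<lambda>a b. a \<in> S \<and> b \<in> S \<and> E a b)\<^sup>*\<^sup>* a b"
      using conn that by (simp add: connected_on_def)
    then show ?thesis
      by (rule rtranclp_mono[THEN predicate2D, rotated]) auto
  qed
  have "?R x y" "?R y x" using \<open>y \<in> S\<close> \<open>E x y\<close> sym by auto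
  then have "?R\<^sup>*\<^sup>* x b" "?R\<^sup>*\<^sup>* b x" if "b \<in> S" for b
    using in_S[OF \<open>y \<in> S\<close> that] in_S[OF that \<open>y \<in> S\<close>]
    by (auto intro: converse_rtranclp_into_rtranclp rtranclp.rtrancl_into_rtrancl)
  then show ?thesis
    unfolding connected_on_def using in_S by blast
qed

lemma connected_graph_nbhd_closed_eq:
  assumes "connected_graph V E" "S \<subseteq> V" "a \<in> S" "\<And>z. z \<in> S \<Longrightarrow> nbhd V E z \<subseteq> S"
  shows "V = S"
proof
  show "V \<subseteq> S"
  proof
    fix z assume "z \<in> V"
    then have "(\<lambda>a b. a \<in> V \<and> b \<in> V \<and> E a b)\<^sup>*\<^sup>* a z"
      using assms(1-3) by (auto simp: connected_graph_def connected_on_def)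
    then show "z \<in> S"
      by (induction rule: rtranclp_induct) (use assms(3,4) in \<open>auto simp: nbhd_def\<close>)
  qed
qed (use assms(2) in simp)

lemma connected_graph_nbhd_nonempty:
  assumes "connected_graph V E" "card V \<ge> 2" "u \<in> V"
  shows "nbhd V E u \<noteq> {}"
proof -
  obtain z where "z \<in> V" "z \<noteq> u"
    using assms(2,3)
    by (metis card_le_Suc0_iff_eq card.infinite not_less_eq_eq numeral_2_eq_2 zero_le)
  then have "(\<lambda>a b. a \<in> V \<and> b \<in> V \<and> E a b)\<^sup>*\<^sup>* u z"
    using assms(1,3) by (simp add: connected_graph_def connected_on_def)
  then show ?thesis
    using \<open>z \<noteq> u\<close> by (cases rule: converse_rtranclpE) (auto simp: nbhd_def)
qed

lemma nonsep_on_subset_block: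
  assumes "finite V" "nonsep_on V E S"
  shows "\<exists>B. is_block V E B \<and> S \<subseteq> B"
proof -
  let ?P = "\<lambda>B. nonsep_on V E B \<and> S \<subseteq> B"
  have bound: "\<forall>B. ?P B \<longrightarrow> card B < Suc (card V)"
    using assms(1) by (auto simp: nonsep_on_def intro: card_mono le_imp_less_Suc)
  obtain B where B: "?P B" and max: "\<And>B'. ?P B' \<Longrightarrow> card B' \<le> card B"
    using ex_has_greatest_nat[of ?P S card, OF _ bound] assms(2) by blast
  have "B' = B" if "nonsep_on V E B'" "B \<subseteq> B'" for B'
  proof (rule card_seteq[symmetric])
    show "finite B'" using that(1) assms(1) finite_subset by (auto simp: nonsep_on_def)
    show "card B' \<le> card B" using that B by (intro max) auto
  qed (use that in simp)
  then show ?thesis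
    unfolding is_block_def using B by blast
qed

lemma block_graph_nonsep_on_clique:
  assumes "block_graph V E" "finite V" "nonsep_on V E S"
  shows "is_clique E S"
  using nonsep_on_subset_block[OF assms(2,3)] assms(1)
  by (auto simp: block_graph_def is_clique_def)

lemma block_graph_4_cycle_chord:
  assumes g: "simple_graph V E" and bg: "block_graph V E"
    and "u \<noteq> w" "x \<noteq> y" "E u x" "E x w" "E w y" "E y u"
  shows "E u w"
proof -
  have sym: "\<And>a b. E a b \<Longrightarrow> E b a" and irr: "\<And>a. \<not> E a a" and "finite V"
    and inV: "\<And>a b. E a b \<Longrightarrow> a \<in> V \<and> b \<in> V"
    using g by (auto simp: simple_graph_def)
  have path: "connected_on E {a, b, c}" if "E a b" "E b c" for a b c
    using that sym by (intro connected_on_insert connected_on_singleton) auto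
  have distinct: "distinct [u, x, w, y]"
    using assms(3-8) irr by auto
  let ?S = "{u, x, w, y}"
  have "connected_on E ?S"
    using assms(5-8) sym by (intro connected_on_insert[OF sym] path) auto
  moreover have "connected_on E (?S - {v})" if "v \<in> ?S" for v
  proof -
    from that consider "v = u" | "v = x" | "v = w" | "v = y" by blast
    then show ?thesis
    proof cases
      case 1
      then have "?S - {v} = {x, w, y}" using distinct by auto
      then show ?thesis using path assms(6,7) by simp
    next
      case 2
      then have "?S - {v} = {w, y, u}" using distinct by auto
      then show ?thesis using path assms(7,8) by simp
    next
      case 3
      then have "?S - {v} = {y, u, x}" using distinct by auto
      then show ?thesis using path assms(8,5) by simp
    next
      case 4
      then have "?S - {v} = {u, x, w}" using distinct by auto
      then show ?thesis using path assms(5,6) by simp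
    qed
  qed
  ultimately have "nonsep_on V E ?S"
    using assms(5,7) inV by (auto simp: nonsep_on_def)
  then have "is_clique E ?S"
    by (rule block_graph_nonsep_on_clique[OF bg \<open>finite V\<close>])
  then show "E u w"
    using \<open>u \<noteq> w\<close> by (simp add: is_clique_def)
qed

lemma gamma_OLD_le_card:
  assumes "finite V" "is_OLD_code V E C"
  shows "gamma_OLD V E \<le> card C"
proof -
  have "{card C | C. is_OLD_code V E C} \<subseteq> card ` Pow V"
    by (auto simp: is_OLD_code_def)
  then have "finite {card C | C. is_OLD_code V E C}"
    using assms(1) finite_subset by blast
  then show ?thesis
    unfolding gamma_OLD_def by (rule Min_le) (use assms(2) in blast)
qed

lemma not_OLD_code_Diff_singleton:
  assumes "no_false_twins V E" "\<forall>u\<in>V. nbhd V E u \<noteq> {}"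
    and "\<not> is_OLD_code V E (V - {v})"
  shows "(\<exists>u\<in>V. nbhd V E u = {v})
    \<or> (\<exists>u\<in>V. \<exists>w\<in>V. v \<notin> nbhd V E w \<and> nbhd V E u = insert v (nbhd V E w))"
proof -
  have sub: "nbhd V E z \<subseteq> V" for z by (auto simp: nbhd_def)
  from assms(3) consider u where "u \<in> V" "nbhd V E u \<inter> (V - {v}) = {}"
    | u w where "u \<in> V" "w \<in> V" "u \<noteq> w"
      "nbhd V E u \<inter> (V - {v}) = nbhd V E w \<inter> (V - {v})"
    unfolding is_OLD_code_def by blast
  then show ?thesis
  proof cases
    case (1 u)
    then have "nbhd V E u \<subseteq> {v}" using sub[of u] by blast
    then show ?thesis using 1(1) assms(2) by (metis subset_singleton_iff)
  next
    case (2 u w)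
    have insert: "nbhd V E a = insert v (nbhd V E b)"
      if "v \<in> nbhd V E a" "nbhd V E a \<inter> (V - {v}) = nbhd V E b \<inter> (V - {v})" for a b
      using that sub[of a] sub[of b] by blast
    have "nbhd V E u \<noteq> nbhd V E w"
      using 2(1-3) assms(1) by (simp add: no_false_twins_def)
    then have "v \<in> nbhd V E u \<longleftrightarrow> v \<notin> nbhd V E w"
      using 2(4) sub[of u] sub[of w] by blast
    then show ?thesis
      using insert 2 by (metis (no_types, lifting))
  qed
qed

lemma block_graph_nbhd_insert_singleton:
  assumes g: "simple_graph V E" and bg: "block_graph V E"
    and "v \<notin> nbhd V E w" "nbhd V E u = insert v (nbhd V E w)" "x \<in> nbhd V E w"
  shows "nbhd V E w = {x}"
proof -
  have sym: "\<And>a b. E a b \<Longrightarrow> E b a" and irr: "\<And>a. \<not> E a a"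
    using g by (auto simp: simple_graph_def)
  note adj = in_nbhd_iff[OF g]
  have "u \<noteq> w" using assms(3,4) by auto
  have "\<not> E u w"
  proof
    assume "E u w"
    then have "E u u" using assms(4) adj sym by blast
    then show False using irr by blast
  qed
  have "y = x" if "y \<in> nbhd V E w" for y
  proof (rule ccontr)
    assume "y \<noteq> x"
    have "E u x" "E x w" "E w y" "E y u"
      using assms(4,5) that adj sym by blast+
    then show False
      using block_graph_4_cycle_chord[OF g bg \<open>u \<noteq> w\<close> \<open>y \<noteq> x\<close>[symmetric]] \<open>\<not> E u w\<close> by blast
  qed
  then show ?thesis using assms(5) by blast
qed

lemma block_graph_not_OLD_code_Diff_singleton:
  assumes g: "simple_graph V E" and bg: "block_graph V E" and "no_false_twins V E"
    and ne: "\<forall>u\<in>V. nbhd V E u \<noteq> {}" and "\<not> is_OLD_code V E (V - {v})"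
  shows "\<exists>u. E u v \<and> (nbhd V E u = {v}
    \<or> (\<exists>x. \<exists>w\<in>V. x \<noteq> v \<and> nbhd V E u = {v, x} \<and> nbhd V E w = {x}))"
proof -
  note adj = in_nbhd_iff[OF g]
  from not_OLD_code_Diff_singleton[OF assms(3-5)] show ?thesis
  proof (elim disjE bexE conjE)
    fix u assume "nbhd V E u = {v}"
    then show ?thesis using adj by blast
  next
    fix u w assume w: "w \<in> V" "v \<notin> nbhd V E w" and u: "nbhd V E u = insert v (nbhd V E w)"
    obtain x where "x \<in> nbhd V E w" using ne w(1) by blast
    then have x: "nbhd V E w = {x}"
      by (rule block_graph_nbhd_insert_singleton[OF g bg w(2) u])
    have "E u v" using u adj by blast
    moreover have "x \<noteq> v" "nbhd V E u = {v, x}" using w(2) u x by auto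
    ultimately show ?thesis using w(1) x by blast
  qed
qed

lemma iso_pathI:
  assumes "bij_betw f V {0..<n}"
    and "\<And>u. u \<in> V \<Longrightarrow> nbhd V E u = {v \<in> V. f u + 1 = f v \<or> f v + 1 = f u}"
  shows "iso_path V E n"
  unfolding iso_path_def
proof (intro exI conjI ballI)
  fix u v assume "u \<in> V" "v \<in> V"
  then show "E u v \<longleftrightarrow> f u + 1 = f v \<or> f v + 1 = f u"
    using assms(2)[of u] by (auto simp: nbhd_def)
qed (rule assms(1))

lemma iso_path_2I:
  assumes "connected_graph V E" "a \<noteq> b" "nbhd V E a = {b}" "nbhd V E b = {a}"
  shows "iso_path V E 2"
proof -
  have V: "V = {a, b}"
    using assms(3,4) by (intro connected_graph_nbhd_closed_eq[OF assms(1)]) (auto simp: nbhd_def)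
  let ?f = "\<lambda>z. if z = a then 0 else 1 :: nat"
  have "bij_betw ?f V {0..<2}"
    using assms(2) by (auto simp: V bij_betw_def inj_on_def)
  moreover have "nbhd V E u = {v \<in> V. ?f u + 1 = ?f v \<or> ?f v + 1 = ?f u}" if "u \<in> V" for u
    using that assms(2-4) unfolding V by auto
  ultimately show ?thesis
    by (rule iso_pathI)
qed

lemma iso_path_4I:
  assumes "connected_graph V E" "distinct [a, b, c, d]"
    and "nbhd V E a = {b}" "nbhd V E b = {a, c}" "nbhd V E c = {b, d}" "nbhd V E d = {c}"
  shows "iso_path V E 4"
proof -
  have V: "V = {a, b, c, d}"
    using assms(3-6) by (intro connected_graph_nbhd_closed_eq[OF assms(1)]) (auto simp: nbhd_def)
  let ?f = "\<lambda>z. if z = a then 0 else if z = b then 1 else if z = c then 2 else 3 :: nat"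
  have "?f ` V = {0..<4}"
    using assms(2) by (auto simp: V)
  moreover have "inj_on ?f V"
    using assms(2) by (auto simp: V inj_on_def)
  moreover have "nbhd V E u = {v \<in> V. ?f u + 1 = ?f v \<or> ?f v + 1 = ?f u}" if "u \<in> V" for u
    using that assms(2-6) unfolding V by auto
  ultimately show ?thesis
    by (intro iso_pathI) (simp_all add: bij_betw_def)
qed

lemma iso_path_2_or_4_if_leaf:
  assumes g: "simple_graph V E" and c: "connected_graph V E" and bg: "block_graph V E"
    and nt: "no_false_twins V E" and ne: "\<forall>u\<in>V. nbhd V E u \<noteq> {}"
    and bad: "\<forall>v\<in>V. \<not> is_OLD_code V E (V - {v})"
    and "a \<in> V" and leaf_a: "nbhd V E a = {b}"
  shows "iso_path V E 2 \<or> iso_path V E 4"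
proof -
  have sym: "\<And>u v. E u v \<Longrightarrow> E v u" and irr: "\<And>u. \<not> E u u"
    using g by (auto simp: simple_graph_def)
  note adj = in_nbhd_iff[OF g]
  have unique_nbr: "u = s" if "nbhd V E t = {s}" "E u t" for s t u
    using that adj sym by blast
  note not_OLD = block_graph_not_OLD_code_Diff_singleton[OF g bg nt ne bad[rule_format]]
  have "E a b" using leaf_a adj by blast
  from not_OLD[OF \<open>a \<in> V\<close>] unique_nbr[OF leaf_a] consider
      "nbhd V E b = {a}"
    | x w where "w \<in> V" "x \<noteq> a" "nbhd V E b = {a, x}" "nbhd V E w = {x}"
    by blast
  then show ?thesis
  proof cases
    case 1
    then show ?thesis
      using iso_path_2I[OF c _ leaf_a] irr \<open>E a b\<close> by blast
  next
    case (2 x w)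
    have "E b x" "E w x" using 2(3,4) adj by blast+
    have "b \<noteq> w" using 2(2-4) by auto
    from not_OLD[OF \<open>w \<in> V\<close>] unique_nbr[OF 2(4)] obtain y where "nbhd V E x = {w, y}"
      using \<open>E b x\<close> \<open>b \<noteq> w\<close> sym adj by fastforce
    then have x: "nbhd V E x = {w, b}"
      using \<open>E b x\<close> \<open>b \<noteq> w\<close> sym adj by auto
    have "distinct [a, b, x, w]"
      using 2 \<open>E a b\<close> \<open>E b x\<close> \<open>E w x\<close> \<open>b \<noteq> w\<close> irr leaf_a by auto
    then have "iso_path V E 4"
      using iso_path_4I[OF c _ leaf_a 2(3) _ 2(4)] x by (simp add: insert_commute)
    then show ?thesis ..
  qed
qed

lemma ex_OLD_code_Diff_singleton:
  assumes g: "simple_graph V E" and c: "connected_graph V E" and bg: "block_graph V E"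
    and "card V \<ge> 2" and nt: "no_false_twins V E"
    and "\<not> iso_path V E 2" and "\<not> iso_path V E 4"
  shows "\<exists>v\<in>V. is_OLD_code V E (V - {v})"
proof (rule ccontr)
  assume "\<not> ?thesis"
  then have bad: "\<forall>v\<in>V. \<not> is_OLD_code V E (V - {v})" by blast
  have ne: "\<forall>u\<in>V. nbhd V E u \<noteq> {}"
    using connected_graph_nbhd_nonempty[OF c \<open>card V \<ge> 2\<close>] by blast
  obtain v where "v \<in> V" using c by (auto simp: connected_graph_def)
  have inV: "\<And>u v. E u v \<Longrightarrow> u \<in> V" using g by (simp add: simple_graph_def)
  from block_graph_not_OLD_code_Diff_singleton[OF g bg nt ne] bad \<open>v \<in> V\<close>
  obtain a b where "a \<in> V" "nbhd V E a = {b}"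
    using inV by blast
  then show False
    using iso_path_2_or_4_if_leaf[OF g c bg nt ne bad] assms(6,7) by blast
qed

theorem theorem2p2:
  fixes V :: "'a set" and E :: "'a \<Rightarrow> 'a \<Rightarrow> bool"
  assumes "simple_graph V E"
    and "connected_graph V E"
    and "block_graph V E"
    and "card V \<ge> 2"
    and "no_false_twins V E"
    and "\<not> iso_path V E 2"
    and "\<not> iso_path V E 4"
  shows "gamma_OLD V E \<le> card V - 1"
proof -
  obtain v where "v \<in> V" "is_OLD_code V E (V - {v})"
    using ex_OLD_code_Diff_singleton[OF assms] by blast
  then have "gamma_OLD V E \<le> card (V - {v})"
    using assms(1) by (intro gamma_OLD_le_card) (simp_all add: simple_graph_def)
  also have "\<dots> = card V - 1"
    using \<open>v \<in> V\<close> by simp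
  finally show ?thesis .
qed

end
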